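(* Let $K \subset \mathbb{C}$ be a convex domain, let $n \geq 1$ and $m \geq 1$ be integers, and let $p:\mathbb{C} \rightarrow \mathbb{C}$ be a polynomial of degree $n+m$ whose roots (listed with multiplicity) are $a_1, \dots, a_{n+m}$, where $a_1, \dots, a_n \in K$ and $a_{n+1}, \dots, a_{n+m}$ lie outside $K$. Suppose that $$ \min_{n+1 \leq i \leq n+m}{ d(a_i, K)} \geq 2\,\mathrm{diam}(K) \sqrt{\frac{m^2}{n^2} + \frac{m}{n}}.$$ Then $p'$ has $n-1$ roots $z$ (counted with multiplicity) satisfying $$ d(z,K) \leq \frac{\mathrm{diam}(K) \sqrt{m}}{\sqrt{m+n}},$$ and its $m$ other roots $z$ satisfy $d(z,K) \geq \mathrm{diam}(K) \sqrt{m/(n+m)}$.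
   Context: For $z \in \mathbb{C}$ and a set $K \subset \mathbb{C}$, $d(z,K) = \inf_{w \in K}|z-w|$ denotes the distance from $z$ to $K$, and $\mathrm{diam}(K) = \sup_{w_1,w_2 \in K}|w_1-w_2|$ is the diameter of $K$. Roots are counted with multiplicity. *)

theory Defs
  imports "HOL-Analysis.Analysis" "HOL-Computational_Algebra.Polynomial"
begin

end

theory Submission
  imports Defs "HOL-Complex_Analysis.Complex_Analysis"
    "HOL-Computational_Algebra.Fundamental_Theorem_Algebra"
begin

(* Write p = c f g, where f has the roots a_1, ..., a_n in K and g the m others, and let
   D = diam K and r = D sqrt (m / (n + m)).  At a point z with d(z,K) = r let w be the nearest
   point of the closure of K and v = z - w.  Every root a of f satisfies <v, a - w> < 0 and
   |a - w| <= D, which forces Re (v / (z - a)) > r^2 / (r^2 + D^2); hence |f'/f| > n r / (r^2 + D^2)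
   there, while |g'/g| <= m / (delta - r), delta being the least distance of a far root to K.
   The hypothesis on delta makes the second bound at most the first, so |f g'| < |f' g| on the
   level curve d(z,K) = r.  Projecting a large circle onto the convex set d(z,K) <= r gives a loop
   tracing that curve, and Rouche's theorem along it shows that p' = c (f'g + f g') has as many
   roots with d(z,K) < r as f'g: the n - 1 roots of f', which lie in the closure of K by
   Gauss-Lucas, and none of the far roots of g. *)

(* The library's argument principle and Rouche theorem need valid (piecewise smooth) paths, but
   the level-set loops used below are merely continuous; winding numbers of products are
   therefore computed from continuous logarithms. *)

lemma winding_number_mult:
  fixes p q :: "real \<Rightarrow> complex"
  assumes "path p" "path q" "0 \<notin> path_image p" "0 \<notin> path_image q"
  shows "winding_number (\<lambda>t. p t * q t) 0 = winding_number p 0 + winding_number q 0"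
proof -
  obtain lp where lp: "path lp"
      "pathfinish lp - pathstart lp = 2 * of_real pi * \<i> * winding_number p 0"
      "\<And>t. t \<in> {0..1} \<Longrightarrow> p t = exp (lp t)"
    using winding_number_as_continuous_log[OF assms(1,3)] by (metis add_0)
  obtain lq where lq: "path lq"
      "pathfinish lq - pathstart lq = 2 * of_real pi * \<i> * winding_number q 0"
      "\<And>t. t \<in> {0..1} \<Longrightarrow> q t = exp (lq t)"
    using winding_number_as_continuous_log[OF assms(2,4)] by (metis add_0)
  have "path (\<lambda>t. lp t + lq t)"
    using lp(1) lq(1) unfolding path_def by (intro continuous_intros)
  then have "winding_number (exp \<circ> (\<lambda>t. lp t + lq t)) 0
      = ((pathfinish lp - pathstart lp) + (pathfinish lq - pathstart lq)) / (2 * of_real pi * \<i>)"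
    by (simp add: winding_number_compose_exp pathfinish_def pathstart_def algebra_simps)
  moreover have "winding_number (\<lambda>t. p t * q t) 0 = winding_number (exp \<circ> (\<lambda>t. lp t + lq t)) 0"
    by (rule winding_number_cong) (simp add: lp(3) lq(3) exp_add)
  ultimately show ?thesis
    using lp(2) lq(2) by (simp add: add_divide_distrib)
qed

lemma winding_number_poly_comp:
  fixes \<gamma> :: "real \<Rightarrow> complex" and P :: "complex poly"
  assumes "path \<gamma>" and "\<And>t. t \<in> {0..1} \<Longrightarrow> poly P (\<gamma> t) \<noteq> 0"
  shows "winding_number (\<lambda>t. poly P (\<gamma> t)) 0 = (\<Sum>z\<in>#proots P. winding_number \<gamma> z)"
proof -
  have "winding_number (\<lambda>t. poly (smult c (\<Prod>z\<in>#R. [:-z, 1:])) (\<gamma> t)) 0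
          = (\<Sum>z\<in>#R. winding_number \<gamma> z)"
    if "\<And>t. t \<in> {0..1} \<Longrightarrow> poly (smult c (\<Prod>z\<in>#R. [:-z, 1:])) (\<gamma> t) \<noteq> 0" for c R
    using that
  proof (induction R)
    case empty
    then have "c \<noteq> 0" by fastforce
    then show ?case by (auto intro!: winding_number_constI)
  next
    case (add x R)
    let ?Q = "\<lambda>t. poly (smult c (\<Prod>z\<in>#R. [:-z, 1:])) (\<gamma> t)"
    have split: "poly (smult c (\<Prod>z\<in>#add_mset x R. [:-z, 1:])) (\<gamma> t) = (\<gamma> t - x) * ?Q t" for t
      by (simp add: algebra_simps)
    have nz: "\<gamma> t - x \<noteq> 0" "?Q t \<noteq> 0" if "t \<in> {0..1}" for t
      using add.prems[OF that] by (simp_all add: split)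
    have "winding_number (\<lambda>t. poly (smult c (\<Prod>z\<in>#add_mset x R. [:-z, 1:])) (\<gamma> t)) 0
        = winding_number (\<lambda>t. (\<gamma> t - x) * ?Q t) 0"
      by (simp only: split)
    also have "\<dots> = winding_number (\<lambda>t. \<gamma> t - x) 0 + winding_number ?Q 0"
      using assms(1) nz
      by (intro winding_number_mult) (auto simp: path_image_def path_def intro!: continuous_intros)
    also have "\<dots> = winding_number \<gamma> x + (\<Sum>z\<in>#R. winding_number \<gamma> z)"
      using add.IH nz by (simp add: winding_number_offset[symmetric])
    finally show ?case
      by simp
  qed
  from this[of "lead_coeff P" "proots P"] show ?thesis
    using assms(2) by (simp add: complex_poly_decompose_multiset)
qed

lemma sum_mset_of_bool_eq_size_filter:
  "(\<Sum>x\<in>#M. of_bool (P x)) = (of_nat (size (filter_mset P M)) :: 'a::semiring_1)"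
  by (induction M) auto

definition level_loop :: "(real \<Rightarrow> complex) \<Rightarrow> (complex \<Rightarrow> real) \<Rightarrow> real \<Rightarrow> bool" where
  "level_loop \<gamma> h r \<longleftrightarrow> path \<gamma> \<and> pathfinish \<gamma> = pathstart \<gamma> \<and> (\<forall>t\<in>{0..1}. h (\<gamma> t) = r)
     \<and> (\<forall>z. h z < r \<longrightarrow> winding_number \<gamma> z = 1) \<and> (\<forall>z. h z > r \<longrightarrow> winding_number \<gamma> z = 0)"

lemma winding_number_poly_comp_level_loop:
  assumes loop: "level_loop \<gamma> h r" and nz: "\<And>z. h z = r \<Longrightarrow> poly P z \<noteq> 0"
  shows "winding_number (\<lambda>t. poly P (\<gamma> t)) 0 = of_nat (size (filter_mset (\<lambda>z. h z < r) (proots P)))"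
proof -
  have "P \<noteq> 0"
    using loop nz[of "\<gamma> 0"] by (auto simp: level_loop_def)
  have "winding_number \<gamma> z = of_bool (h z < r)" if "z \<in># proots P" for z
  proof -
    have "h z \<noteq> r"
      using that nz[of z] \<open>P \<noteq> 0\<close> by auto
    then show ?thesis
      using loop by (cases "h z < r") (auto simp: level_loop_def)
  qed
  then have "(\<Sum>z\<in>#proots P. winding_number \<gamma> z) = (\<Sum>z\<in>#proots P. of_bool (h z < r))"
    by (intro arg_cong[where f = sum_mset] image_mset_cong)
  also have "\<dots> = of_nat (size (filter_mset (\<lambda>z. h z < r) (proots P)))"
    by (rule sum_mset_of_bool_eq_size_filter)
  finally show ?thesis
    using loop nz by (subst winding_number_poly_comp) (auto simp: level_loop_def)
qed

lemma Rouche_level_loop: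
  assumes loop: "level_loop \<gamma> h r"
    and near: "\<And>z. h z = r \<Longrightarrow> norm (poly P z - poly Q z) < norm (poly Q z)"
  shows "size (filter_mset (\<lambda>z. h z < r) (proots P)) = size (filter_mset (\<lambda>z. h z < r) (proots Q))"
proof -
  have nzP: "poly P z \<noteq> 0" and nzQ: "poly Q z \<noteq> 0" if "h z = r" for z
    using near[OF that] by auto
  have "path (\<lambda>t. poly R (\<gamma> t))" "pathfinish (\<lambda>t. poly R (\<gamma> t)) = pathstart (\<lambda>t. poly R (\<gamma> t))"
    for R :: "complex poly"
    using loop by (auto simp: level_loop_def path_def pathfinish_def pathstart_def intro!: continuous_intros)
  then have "winding_number (\<lambda>t. poly P (\<gamma> t)) 0 = winding_number (\<lambda>t. poly Q (\<gamma> t)) 0"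
    using loop near by (intro winding_number_nearby_loops_eq) (auto simp: level_loop_def)
  then show ?thesis
    using winding_number_poly_comp_level_loop[OF loop] nzP nzQ by (metis of_nat_eq_iff)
qed

lemma infdist_closure [simp]: "infdist x (closure S) = infdist x S"
  by (simp add: infdist_eq_setdist)

lemma infdist_eq_dist_closest_point:
  fixes K :: "'a::euclidean_space set"
  assumes "K \<noteq> {}"
  shows "infdist z K = dist z (closest_point (closure K) z)"
proof -
  have "infdist z K = infdist z (closure K)"
    by simp
  also have "\<dots> = dist z (closest_point (closure K) z)"
  proof (rule antisym)
    show "infdist z (closure K) \<le> dist z (closest_point (closure K) z)"
      using assms by (intro infdist_le closest_point_in_set) auto
    obtain w where "w \<in> closure K" "infdist z (closure K) = dist z w"
      using infdist_attains_inf[of "closure K" z] assms by auto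
    then show "dist z (closest_point (closure K) z) \<le> infdist z (closure K)"
      by (simp add: closest_point_le)
  qed
  finally show ?thesis .
qed

lemma inner_closest_point_interior_neg:
  fixes S :: "'a::euclidean_space set"
  assumes "convex S" "closed S" "z \<notin> S" "a \<in> interior S"
  shows "inner (z - closest_point S z) (a - closest_point S z) < 0"
proof -
  define w where "w = closest_point S z"
  have "S \<noteq> {}"
    using assms(4) interior_subset by blast
  then have w: "w \<in> S" "\<forall>y\<in>S. dist z w \<le> dist z y"
    using closest_point_exists[OF assms(2)] by (auto simp: w_def)
  have "z \<noteq> w"
    using w assms(3) by auto
  obtain e where "e > 0" "ball a e \<subseteq> S"
    using assms(4) mem_interior by blast
  define \<epsilon> where "\<epsilon> = e / (2 * norm (z - w))"
  have "\<epsilon> > 0"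
    using \<open>e > 0\<close> \<open>z \<noteq> w\<close> by (simp add: \<epsilon>_def)
  have "norm (\<epsilon> *\<^sub>R (z - w)) < e"
    using \<open>e > 0\<close> \<open>z \<noteq> w\<close> by (simp add: \<epsilon>_def)
  then have "a + \<epsilon> *\<^sub>R (z - w) \<in> S"
    using \<open>ball a e \<subseteq> S\<close> by (auto simp: dist_norm)
  then have "inner (z - w) (a + \<epsilon> *\<^sub>R (z - w) - w) \<le> 0"
    by (rule any_closest_point_dot[OF assms(1,2) w(1) _ w(2)])
  then have "inner (z - w) (a - w) + \<epsilon> * (norm (z - w))\<^sup>2 \<le> 0"
    by (simp add: inner_diff_right inner_add_right power2_norm_eq_inner algebra_simps)
  moreover have "\<epsilon> * (norm (z - w))\<^sup>2 > 0"
    using \<open>\<epsilon> > 0\<close> \<open>z \<noteq> w\<close> by simp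
  ultimately show ?thesis
    unfolding w_def by linarith
qed

lemma convex_infdist_le:
  fixes K :: "'a::euclidean_space set"
  assumes "convex K"
  shows "convex {z. infdist z K \<le> r}"
proof (cases "K = {}")
  case False
  let ?w = "closest_point (closure K)"
  show ?thesis
  proof (rule convexI)
    fix x y :: 'a and u v :: real
    assume xy: "x \<in> {z. infdist z K \<le> r}" "y \<in> {z. infdist z K \<le> r}"
      and uv: "0 \<le> u" "0 \<le> v" "u + v = 1"
    have "u *\<^sub>R ?w x + v *\<^sub>R ?w y \<in> closure K"
      using False assms uv by (intro convexD convex_closure closest_point_in_set) auto
    then have "infdist (u *\<^sub>R x + v *\<^sub>R y) K \<le> dist (u *\<^sub>R x + v *\<^sub>R y) (u *\<^sub>R ?w x + v *\<^sub>R ?w y)"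
      by (metis infdist_closure infdist_le)
    also have "\<dots> = norm (u *\<^sub>R (x - ?w x) + v *\<^sub>R (y - ?w y))"
      by (simp add: dist_norm algebra_simps)
    also have "\<dots> \<le> norm (u *\<^sub>R (x - ?w x)) + norm (v *\<^sub>R (y - ?w y))"
      by (rule norm_triangle_ineq)
    also have "\<dots> = u * infdist x K + v * infdist y K"
      using uv False by (simp add: infdist_eq_dist_closest_point dist_norm)
    also have "\<dots> \<le> u * r + v * r"
      using xy uv by (intro add_mono mult_left_mono) auto
    finally show "u *\<^sub>R x + v *\<^sub>R y \<in> {z. infdist z K \<le> r}"
      using uv by (simp add: distrib_right[symmetric])
  qed
qed (cases "0 \<le> r"; simp add: infdist_def)

lemma bounded_infdist_le:
  fixes K :: "'a::euclidean_space set"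
  assumes "bounded K" "K \<noteq> {}"
  shows "bounded {z. infdist z K \<le> r}"
proof -
  obtain k where "k \<in> K"
    using assms(2) by blast
  have "dist k z \<le> diameter K + r" if "infdist z K \<le> r" for z
  proof -
    let ?w = "closest_point (closure K) z"
    have "?w \<in> closure K"
      using assms(2) by (intro closest_point_in_set) auto
    then have "dist k ?w \<le> diameter K"
      using \<open>k \<in> K\<close> assms(1) diameter_bounded_bound[of "closure K" k ?w]
      by (simp add: closure_subset[THEN subsetD] diameter_closure bounded_closure)
    moreover have "dist ?w z \<le> r"
      using that assms(2) by (simp add: infdist_eq_dist_closest_point dist_commute)
    ultimately show ?thesis
      using dist_triangle[of k z ?w] by linarith
  qed
  then show ?thesis
    by (intro bounded_subset[OF bounded_cball[of k "diameter K + r"]]) auto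
qed

lemma closest_point_in_frontier:
  fixes S :: "'a::euclidean_space set"
  assumes "closed S" "interior S \<noteq> {}" "x \<notin> S"
  shows "closest_point S x \<in> frontier S"
proof -
  have "S \<noteq> {}"
    using assms(2) interior_subset by blast
  moreover have "x \<in> affine hull S - rel_interior S"
    using assms interior_subset by (auto simp: affine_hull_nonempty_interior rel_interior_nonempty_interior)
  ultimately show ?thesis
    using assms by (metis closest_point_in_rel_frontier affine_hull_nonempty_interior rel_frontier_frontier)
qed

lemma dist_closest_point_less:
  fixes S :: "'a::euclidean_space set"
  assumes "closed S" "z \<in> interior S" "x \<notin> S"
  shows "dist x (closest_point S x) < dist x z"
proof -
  obtain e where "e > 0" and ball_e: "ball z e \<subseteq> S"
    using assms(2) mem_interior by blast
  have xz: "norm (x - z) \<ge> e"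
    using ball_e assms(3) by (force simp: dist_norm norm_minus_commute)
  define y where "y = z + (e / (2 * norm (x - z))) *\<^sub>R (x - z)"
  have "dist z y < e"
    using \<open>e > 0\<close> xz by (simp add: y_def dist_norm)
  then have "y \<in> S"
    using ball_e by auto
  have "x - y = (1 - e / (2 * norm (x - z))) *\<^sub>R (x - z)"
    by (simp add: y_def algebra_simps)
  moreover have c: "0 \<le> 1 - e / (2 * norm (x - z))"
    using \<open>e > 0\<close> xz by (simp add: divide_le_eq)
  ultimately have "norm (x - y) = (1 - e / (2 * norm (x - z))) * norm (x - z)"
    by (simp only: norm_scaleR abs_of_nonneg[OF c])
  also have "\<dots> = norm (x - z) - e / 2"
    using \<open>e > 0\<close> xz by (auto simp: field_simps)
  finally have "dist x y < dist x z"
    using \<open>e > 0\<close> by (simp add: dist_norm)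
  then show ?thesis
    using closest_point_le[OF assms(1) \<open>y \<in> S\<close>, where a = x] by linarith
qed

lemma winding_number_closest_point_circlepath:
  fixes S :: "complex set"
  assumes "convex S" "closed S" "S \<subseteq> ball c R" "z \<in> interior S"
  shows "winding_number (closest_point S \<circ> circlepath c R) z = 1"
proof -
  have "S \<noteq> {}"
    using assms(4) interior_subset by blast
  have "z \<in> ball c R"
    using assms(3,4) interior_subset by blast
  have "circlepath c R t \<notin> S" if "t \<in> {0..1}" for t
  proof -
    have "circlepath c R t \<in> sphere c \<bar>R\<bar>"
      using that path_image_circlepath[of c R] unfolding path_image_def by blast
    then show ?thesis
      using assms(3) by fastforce
  qed
  then have "norm (closest_point S (circlepath c R t) - circlepath c R t) < norm (circlepath c R t - z)"
    if "t \<in> {0..1}" for t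
    using that dist_closest_point_less[OF assms(2,4)] by (metis dist_norm norm_minus_commute)
  moreover have "path (closest_point S \<circ> circlepath c R)"
    using continuous_on_closest_point[OF assms(1,2) \<open>S \<noteq> {}\<close>] by (intro path_continuous_image) auto
  ultimately have "winding_number (closest_point S \<circ> circlepath c R) z = winding_number (circlepath c R) z"
    by (intro winding_number_nearby_loops_eq) (auto simp: pathfinish_compose pathstart_compose)
  also have "\<dots> = 1"
    using \<open>z \<in> ball c R\<close> by (intro winding_number_circlepath) (simp add: dist_norm norm_minus_commute)
  finally show ?thesis .
qed

lemma infdist_closest_point_sublevel:
  fixes K :: "'a::euclidean_space set"
  assumes "K \<noteq> {}" "r > 0" "infdist x K > r"
  shows "infdist (closest_point {z. infdist z K \<le> r} x) K = r"
proof -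
  define S where "S = {z. infdist z K \<le> r}"
  have "closed S"
    by (auto simp: S_def intro!: closed_Collect_le continuous_intros)
  have below: "{z. infdist z K < r} \<subseteq> interior S"
    by (intro interior_maximal) (auto simp: S_def intro!: open_Collect_less continuous_intros)
  then have "interior S \<noteq> {}"
    using assms(1,2) by (metis all_not_in_conv infdist_zero mem_Collect_eq subsetD)
  then have "closest_point S x \<in> S - interior S"
    using closest_point_in_frontier[OF \<open>closed S\<close>] assms(3) \<open>closed S\<close>
    by (simp add: S_def frontier_def)
  then show ?thesis
    using below by (force simp: S_def)
qed

lemma level_loop_infdist:
  fixes K :: "complex set"
  assumes "convex K" "bounded K" "K \<noteq> {}" "r > 0"
  obtains \<gamma> where "level_loop \<gamma> (\<lambda>z. infdist z K) r"
proof -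
  define S where "S = {z. infdist z K \<le> r}"
  have "closed S" "convex S"
    using convex_infdist_le[OF assms(1)] by (auto simp: S_def intro!: closed_Collect_le continuous_intros)
  have below: "{z. infdist z K < r} \<subseteq> interior S"
    by (intro interior_maximal) (auto simp: S_def intro!: open_Collect_less continuous_intros)
  obtain k where "k \<in> K"
    using assms(3) by blast
  then have "S \<noteq> {}"
    using assms(4) by (auto simp: S_def intro!: exI[of _ k])
  obtain R where "S \<subseteq> ball k R"
    using bounded_subset_ballD[OF bounded_infdist_le[OF assms(2,3), of r], of k] unfolding S_def by blast
  define \<gamma> where "\<gamma> = closest_point S \<circ> circlepath k R"
  have \<gamma>: "path \<gamma>" "pathfinish \<gamma> = pathstart \<gamma>" "path_image \<gamma> \<subseteq> S"
    using continuous_on_closest_point[OF \<open>convex S\<close> \<open>closed S\<close> \<open>S \<noteq> {}\<close>]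
      closest_point_in_set[OF \<open>closed S\<close> \<open>S \<noteq> {}\<close>]
    by (auto simp: \<gamma>_def path_image_def pathfinish_compose pathstart_compose intro!: path_continuous_image)
  moreover have "infdist (\<gamma> t) K = r" if "t \<in> {0..1}" for t
  proof -
    have "circlepath k R t \<in> sphere k \<bar>R\<bar>"
      using that path_image_circlepath[of k R] unfolding path_image_def by blast
    then have "circlepath k R t \<notin> S"
      using \<open>S \<subseteq> ball k R\<close> by fastforce
    then have "infdist (circlepath k R t) K > r"
      by (simp add: S_def)
    then show ?thesis
      using infdist_closest_point_sublevel[OF assms(3,4)] by (simp add: \<gamma>_def S_def)
  qed
  moreover have "winding_number \<gamma> z = 1" if "infdist z K < r" for z
    using that below winding_number_closest_point_circlepath[OF \<open>convex S\<close> \<open>closed S\<close> \<open>S \<subseteq> ball k R\<close>]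
    by (auto simp: \<gamma>_def)
  moreover have "winding_number \<gamma> z = 0" if "infdist z K > r" for z
    using that \<gamma> \<open>convex S\<close> by (intro winding_number_zero_outside[of \<gamma> S]) (auto simp: S_def)
  ultimately show ?thesis
    using that[of \<gamma>] by (simp add: level_loop_def)
qed

lemma diameter_pos_interior:
  fixes K :: "'a::euclidean_space set"
  assumes "bounded K" "interior K \<noteq> {}"
  shows "diameter K > 0"
proof -
  obtain k e where "e > 0" "ball k e \<subseteq> K"
    using assms(2) mem_interior by blast
  obtain b :: 'a where "b \<in> Basis"
    using nonempty_Basis by blast
  then have "k + (e / 2) *\<^sub>R b \<in> K" "k \<in> K"
    using \<open>e > 0\<close> \<open>ball k e \<subseteq> K\<close> by (auto simp: dist_norm)
  then have "dist k (k + (e / 2) *\<^sub>R b) \<le> diameter K"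
    by (intro diameter_bounded_bound[OF assms(1)])
  then show ?thesis
    using \<open>e > 0\<close> \<open>b \<in> Basis\<close> by (simp add: dist_norm)
qed

lemma Re_divide_eq_inner: "Re (u / v) = inner u v / (norm v)\<^sup>2"
  by (simp add: Re_divide' inner_complex_def)

lemma poly_pderiv_prod_linear:
  fixes a :: "'i \<Rightarrow> 'a::field"
  assumes "finite A" "\<forall>i\<in>A. z \<noteq> a i"
  shows "poly (pderiv (\<Prod>i\<in>A. [:- a i, 1:])) z = (\<Prod>i\<in>A. z - a i) * (\<Sum>i\<in>A. 1 / (z - a i))"
proof -
  have "poly (pderiv (\<Prod>i\<in>A. [:- a i, 1:])) z = (\<Sum>i\<in>A. \<Prod>j\<in>A - {i}. z - a j)"
    by (simp add: pderiv_prod poly_sum poly_prod pderiv_pCons)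
  also have "\<dots> = (\<Sum>i\<in>A. (\<Prod>j\<in>A. z - a j) * (1 / (z - a i)))"
  proof (rule sum.cong[OF refl])
    fix i assume "i \<in> A"
    then have "(\<Prod>j\<in>A. z - a j) = (z - a i) * (\<Prod>j\<in>A - {i}. z - a j)"
      using prod.remove[OF assms(1)] by blast
    then show "(\<Prod>j\<in>A - {i}. z - a j) = (\<Prod>j\<in>A. z - a j) * (1 / (z - a i))"
      using assms(2) \<open>i \<in> A\<close> by simp
  qed
  also have "\<dots> = (\<Prod>i\<in>A. z - a i) * (\<Sum>i\<in>A. 1 / (z - a i))"
    by (simp add: sum_distrib_left)
  finally show ?thesis .
qed

lemma Re_divide_diff_pos:
  fixes v b :: complex
  assumes "v \<noteq> 0" "inner v b \<le> 0"
  shows "Re (v / (v - b)) > 0"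
proof -
  have "v - b \<noteq> 0"
    using assms by (metis eq_iff_diff_eq_0 inner_gt_zero_iff not_le)
  moreover have "inner v (v - b) > 0"
    using assms by (simp add: inner_diff_right) (metis inner_gt_zero_iff order_le_less_trans)
  ultimately show ?thesis
    by (simp add: Re_divide_eq_inner)
qed

lemma Re_divide_diff_gt:
  fixes v b :: complex
  assumes "norm v = r" "r < D" "norm b \<le> D" "inner v b < 0"
  shows "Re (v / (v - b)) > r\<^sup>2 / (r\<^sup>2 + D\<^sup>2)"
proof -
  define t where "t = inner v b"
  have "v - b \<noteq> 0"
    using assms(4) by (metis eq_iff_diff_eq_0 inner_ge_zero not_le)
  have "r \<ge> 0"
    using assms(1) by auto
  have N: "(norm (v - b))\<^sup>2 \<le> r\<^sup>2 - 2 * t + D\<^sup>2"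
  proof -
    have "(norm (v - b))\<^sup>2 = r\<^sup>2 - 2 * t + (norm b)\<^sup>2"
      using dot_norm_neg[of v b] assms(1) unfolding t_def by simp
    moreover have "(norm b)\<^sup>2 \<le> D\<^sup>2"
      using assms(3) by (simp add: power_mono)
    ultimately show ?thesis
      by linarith
  qed
  have "r\<^sup>2 * (norm (v - b))\<^sup>2 < (r\<^sup>2 - t) * (r\<^sup>2 + D\<^sup>2)"
  proof -
    have "r\<^sup>2 * (norm (v - b))\<^sup>2 \<le> r\<^sup>2 * (r\<^sup>2 - 2 * t + D\<^sup>2)"
      using N by (simp add: mult_left_mono)
    moreover have "r\<^sup>2 < D\<^sup>2"
      using \<open>r \<ge> 0\<close> assms(2) by (simp add: power_strict_mono)
    then have "0 < t * (r\<^sup>2 - D\<^sup>2)"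
      using assms(4) by (simp add: t_def mult_neg_neg)
    ultimately show ?thesis
      by (simp add: algebra_simps)
  qed
  moreover have "inner v (v - b) = r\<^sup>2 - t"
    using assms(1) by (simp add: t_def inner_diff_right power2_norm_eq_inner[symmetric])
  moreover have "r\<^sup>2 + D\<^sup>2 > 0"
    using \<open>r \<ge> 0\<close> assms(2) by (simp add: add_nonneg_pos)
  ultimately show ?thesis
    using \<open>v - b \<noteq> 0\<close> by (simp add: Re_divide_eq_inner divide_less_eq less_divide_eq frac_less_eq)
qed

lemma poly_pderiv_prod_nonzero_outside_convex:
  fixes S :: "complex set" and a :: "'i \<Rightarrow> complex"
  assumes "convex S" "closed S" "finite A" "A \<noteq> {}" "\<forall>i\<in>A. a i \<in> S" "z \<notin> S"
  shows "poly (pderiv (\<Prod>i\<in>A. [:- a i, 1:])) z \<noteq> 0"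
proof -
  define w where "w = closest_point S z"
  have "S \<noteq> {}"
    using assms(4,5) by blast
  then have w: "w \<in> S" "\<forall>y\<in>S. dist z w \<le> dist z y"
    using closest_point_exists[OF assms(2)] by (auto simp: w_def)
  have "z - w \<noteq> 0"
    using w(1) assms(6) by auto
  have "z \<noteq> a i" if "i \<in> A" for i
    using that assms(5,6) by auto
  have "Re ((z - w) / (z - a i)) > 0" if "i \<in> A" for i
  proof -
    have "inner (z - w) (a i - w) \<le> 0"
      using that assms(5) by (intro any_closest_point_dot[OF assms(1,2) w(1) _ w(2)]) auto
    then show ?thesis
      using Re_divide_diff_pos[OF \<open>z - w \<noteq> 0\<close>] by fastforce
  qed
  then have "Re ((z - w) * (\<Sum>i\<in>A. 1 / (z - a i))) > 0"
    using assms(3,4) by (simp add: sum_distrib_left sum_pos)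
  then have "(\<Sum>i\<in>A. 1 / (z - a i)) \<noteq> 0"
    by (metis less_irrefl mult_zero_right zero_complex.sel(1))
  then show ?thesis
    using \<open>\<And>i. i \<in> A \<Longrightarrow> z \<noteq> a i\<close> assms(3) by (simp add: poly_pderiv_prod_linear)
qed

lemma Re_divide_outer_normal_gt:
  fixes K :: "complex set" and r :: real
  assumes "convex K" "open K" "bounded K" "a \<in> K"
    and "infdist z K = r" "0 < r" "r < diameter K"
  shows "Re ((z - closest_point (closure K) z) / (z - a)) > r\<^sup>2 / (r\<^sup>2 + (diameter K)\<^sup>2)"
proof -
  define w where "w = closest_point (closure K) z"
  have "K \<noteq> {}"
    using assms(4) by blast
  then have "norm (z - w) = r" "w \<in> closure K"
    using assms(5) by (simp_all add: w_def infdist_eq_dist_closest_point dist_norm closest_point_in_set)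
  have "z \<notin> closure K"
    using assms(5,6) infdist_zero[of z "closure K"] by auto
  have "a \<in> interior (closure K)"
    using assms(2,4) interior_maximal[OF closure_subset] by blast
  then have "inner (z - w) (a - w) < 0"
    unfolding w_def using \<open>z \<notin> closure K\<close> assms(1)
    by (intro inner_closest_point_interior_neg) (auto simp: convex_closure)
  moreover have "norm (a - w) \<le> diameter K"
    using \<open>w \<in> closure K\<close> assms(3,4) diameter_bounded_bound[of "closure K" a w]
    by (simp add: dist_norm closure_subset[THEN subsetD] diameter_closure bounded_closure)
  ultimately have "Re ((z - w) / ((z - w) - (a - w))) > r\<^sup>2 / (r\<^sup>2 + (diameter K)\<^sup>2)"
    using assms(7) by (intro Re_divide_diff_gt[OF \<open>norm (z - w) = r\<close>]) auto
  then show ?thesis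
    by (simp add: w_def)
qed

lemma norm_sum_inverse_diff_gt:
  fixes K :: "complex set" and a :: "'i \<Rightarrow> complex" and r :: real
  assumes "convex K" "open K" "bounded K" "finite A" "A \<noteq> {}" "\<forall>i\<in>A. a i \<in> K"
    and "infdist z K = r" "0 < r" "r < diameter K"
  shows "norm (\<Sum>i\<in>A. 1 / (z - a i)) > card A * r / (r\<^sup>2 + (diameter K)\<^sup>2)"
proof -
  define D where "D = diameter K"
  define v where "v = z - closest_point (closure K) z"
  have "K \<noteq> {}"
    using assms(5,6) by blast
  then have "norm v = r"
    using assms(7) by (simp add: v_def infdist_eq_dist_closest_point dist_norm)
  have "card A * (r\<^sup>2 / (r\<^sup>2 + D\<^sup>2)) < (\<Sum>i\<in>A. Re (v / (z - a i)))"
    using assms Re_divide_outer_normal_gt[OF assms(1-3) _ assms(7-9)]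
      sum_strict_mono[OF assms(4,5), of "\<lambda>_. r\<^sup>2 / (r\<^sup>2 + D\<^sup>2)"]
    by (simp add: D_def v_def)
  also have "\<dots> = Re (v * (\<Sum>i\<in>A. 1 / (z - a i)))"
    by (simp add: sum_distrib_left)
  also have "\<dots> \<le> r * norm (\<Sum>i\<in>A. 1 / (z - a i))"
    using complex_Re_le_cmod \<open>norm v = r\<close> by (metis norm_mult)
  finally have "card A * (r\<^sup>2 / (r\<^sup>2 + D\<^sup>2)) / r < norm (\<Sum>i\<in>A. 1 / (z - a i))"
    using assms(8) by (metis mult.commute pos_divide_less_eq)
  moreover have "card A * (r\<^sup>2 / (r\<^sup>2 + D\<^sup>2)) / r = card A * r / (r\<^sup>2 + D\<^sup>2)"
    using assms(8) by (simp add: power2_eq_square)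
  ultimately show ?thesis
    by (simp add: D_def)
qed

locale near_far_roots =
  fixes K :: "complex set" and a :: "'i \<Rightarrow> complex" and A B :: "'i set" and \<delta> r :: real
  assumes K_convex: "convex K" and K_open: "open K" and K_bounded: "bounded K"
    and finite_A: "finite A" and finite_B: "finite B" and A_nonempty: "A \<noteq> {}"
    and near: "\<forall>i\<in>A. a i \<in> K" and far: "\<forall>j\<in>B. \<delta> \<le> infdist (a j) K"
    and r_pos: "0 < r" and r_less_diameter: "r < diameter K" and r_less_\<delta>: "r < \<delta>"
    and separation: "card B / (\<delta> - r) \<le> card A * r / (r\<^sup>2 + (diameter K)\<^sup>2)"
begin

abbreviation near_factor :: "complex poly" where
  "near_factor \<equiv> \<Prod>i\<in>A. [:- a i, 1:]"

abbreviation far_factor :: "complex poly" where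
  "far_factor \<equiv> \<Prod>j\<in>B. [:- a j, 1:]"

lemma norm_near_factor_mult_pderiv_far_less:
  assumes "infdist z K = r"
  shows "norm (poly near_factor z * poly (pderiv far_factor) z)
           < norm (poly (pderiv near_factor) z * poly far_factor z)"
proof -
  have z_near: "z \<noteq> a i" if "i \<in> A" for i
    using that near assms r_pos by auto
  have dist_far: "\<delta> - r \<le> norm (z - a j)" if "j \<in> B" for j
    using that far assms infdist_triangle[of "a j" K z] by (force simp: dist_norm norm_minus_commute)
  then have z_far: "z \<noteq> a j" if "j \<in> B" for j
    using that r_less_\<delta> by fastforce
  have "norm (\<Sum>j\<in>B. 1 / (z - a j)) \<le> (\<Sum>j\<in>B. 1 / (\<delta> - r))"
    using dist_far r_less_\<delta>
    by (intro order.trans[OF norm_sum sum_mono]) (simp add: norm_divide frac_le)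
  also have "\<dots> \<le> card A * r / (r\<^sup>2 + (diameter K)\<^sup>2)"
    using separation by simp
  also have "\<dots> < norm (\<Sum>i\<in>A. 1 / (z - a i))"
    using K_convex K_open K_bounded finite_A A_nonempty near assms r_pos r_less_diameter
    by (rule norm_sum_inverse_diff_gt)
  finally have "norm (\<Sum>j\<in>B. 1 / (z - a j)) < norm (\<Sum>i\<in>A. 1 / (z - a i))" .
  moreover have "poly near_factor z \<noteq> 0" "poly far_factor z \<noteq> 0"
    using z_near z_far finite_A finite_B by (auto simp: poly_prod)
  ultimately show ?thesis
    using z_near z_far finite_A finite_B
    by (simp add: poly_pderiv_prod_linear poly_prod norm_mult)
qed

lemma degree_near_factor: "degree near_factor = card A"
  using finite_A by (subst degree_prod_sum_eq) auto

lemma proots_pderiv_near_factor_in_closure: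
  assumes "z \<in># proots (pderiv near_factor)"
  shows "z \<in> closure K"
proof -
  have "pderiv near_factor \<noteq> 0"
    using degree_near_factor finite_A A_nonempty by (simp add: pderiv_eq_0_iff)
  then show ?thesis
    using assms poly_pderiv_prod_nonzero_outside_convex[of "closure K" A a z]
      K_convex finite_A A_nonempty near closure_subset by (auto simp: convex_closure)
qed

lemma size_proots_pderiv_below_level:
  "size (filter_mset (\<lambda>z. infdist z K < r) (proots (pderiv (near_factor * far_factor)))) = card A - 1"
proof -
  have "K \<noteq> {}"
    using near A_nonempty by blast
  obtain \<gamma> where loop: "level_loop \<gamma> (\<lambda>z. infdist z K) r"
    using level_loop_infdist[OF K_convex K_bounded \<open>K \<noteq> {}\<close> r_pos] .
  have "pderiv near_factor \<noteq> 0" "far_factor \<noteq> 0"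
    using degree_near_factor finite_A A_nonempty finite_B by (auto simp: pderiv_eq_0_iff prod_zero_iff)
  have near_roots: "filter_mset (\<lambda>z. infdist z K < r) (proots (pderiv near_factor)) = proots (pderiv near_factor)"
    using proots_pderiv_near_factor_in_closure r_pos
    by (simp add: filter_mset_eq_conv) (metis infdist_closure infdist_zero)
  have far_roots: "filter_mset (\<lambda>z. infdist z K < r) (proots far_factor) = {#}"
    using \<open>far_factor \<noteq> 0\<close> far r_less_\<delta> finite_B by (force simp: poly_prod)
  have "size (filter_mset (\<lambda>z. infdist z K < r) (proots (pderiv (near_factor * far_factor))))
      = size (filter_mset (\<lambda>z. infdist z K < r) (proots (pderiv near_factor * far_factor)))"
    using norm_near_factor_mult_pderiv_far_less
    by (intro Rouche_level_loop[OF loop]) (simp add: pderiv_mult)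
  also have "\<dots> = size (proots (pderiv near_factor))"
    using \<open>pderiv near_factor \<noteq> 0\<close> \<open>far_factor \<noteq> 0\<close> near_roots far_roots by (simp add: proots_mult)
  also have "\<dots> = card A - 1"
    by (simp add: size_proots_complex degree_pderiv degree_near_factor)
  finally show ?thesis .
qed

end

lemma sqrt_ratio_mult_sqrt:
  fixes n m :: real
  assumes "n > 0" "m \<ge> 0"
  shows "sqrt (m / (n + m)) * sqrt (m\<^sup>2 / n\<^sup>2 + m / n) = m / n"
proof -
  have "m\<^sup>2 / n\<^sup>2 + m / n = m * (n + m) / n\<^sup>2"
    using assms(1) by (simp add: field_simps power2_eq_square)
  then have "m / (n + m) * (m\<^sup>2 / n\<^sup>2 + m / n) = (m / n)\<^sup>2"
    using assms by (simp add: power2_eq_square)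
  then show ?thesis
    using assms by (simp flip: real_sqrt_mult)
qed

lemma sqrt_ratio_radius_bounds:
  fixes n m :: nat and D \<delta> :: real
  assumes "n \<ge> 1" "m \<ge> 1" "D > 0"
    and \<delta>: "\<delta> \<ge> 2 * D * sqrt ((real m)\<^sup>2 / (real n)\<^sup>2 + real m / real n)"
  defines "r \<equiv> D * sqrt (real m / real (n + m))"
  shows "0 < r" "r < D" "r < \<delta>" "real m / (\<delta> - r) \<le> real n * r / (r\<^sup>2 + D\<^sup>2)"
proof -
  have "0 < real m / real (n + m)" "real m / real (n + m) < 1"
    using assms(1,2) by (simp_all add: field_simps)
  then show "0 < r" "r < D"
    using \<open>D > 0\<close> by (simp_all add: r_def)
  have r2: "real (n + m) * r\<^sup>2 = real m * D\<^sup>2"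
    using assms(1) by (simp add: r_def power_mult_distrib)
  have "sqrt (real m / real (n + m)) * sqrt ((real m)\<^sup>2 / (real n)\<^sup>2 + real m / real n) = real m / real n"
    using sqrt_ratio_mult_sqrt[of "real n" "real m"] assms(1) by simp
  then have "real n * r * (2 * D * sqrt ((real m)\<^sup>2 / (real n)\<^sup>2 + real m / real n)) = 2 * real m * D\<^sup>2"
    using assms(1) by (simp add: r_def power2_eq_square algebra_simps)
  moreover have "real n * r * (2 * D * sqrt ((real m)\<^sup>2 / (real n)\<^sup>2 + real m / real n)) \<le> real n * r * \<delta>"
    using \<delta> \<open>0 < r\<close> by (intro mult_left_mono) auto
  ultimately have "2 * real m * D\<^sup>2 \<le> real n * r * \<delta>"
    by linarith
  have "real m * (r\<^sup>2 + D\<^sup>2) = 2 * real m * D\<^sup>2 - real n * r\<^sup>2"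
    using r2 by (simp add: algebra_simps)
  also have "\<dots> \<le> real n * r * (\<delta> - r)"
    using \<open>2 * real m * D\<^sup>2 \<le> real n * r * \<delta>\<close> by (simp add: algebra_simps power2_eq_square)
  finally have key: "real m * (r\<^sup>2 + D\<^sup>2) \<le> real n * r * (\<delta> - r)" .
  have "0 < real m * (r\<^sup>2 + D\<^sup>2)"
    using assms(2,3) by (simp add: add_nonneg_pos)
  with key have "0 < real n * r * (\<delta> - r)"
    by linarith
  moreover have "0 < real n * r"
    using \<open>0 < r\<close> assms(1) by simp
  ultimately show "r < \<delta>"
    using zero_less_mult_pos by force
  moreover have "0 < r\<^sup>2 + D\<^sup>2"
    using \<open>D > 0\<close> by (simp add: add_nonneg_pos)
  ultimately show "real m / (\<delta> - r) \<le> real n * r / (r\<^sup>2 + D\<^sup>2)"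
    using key by (simp add: field_simps)
qed

lemma complex_poly_decompose_list:
  fixes P :: "complex poly"
  assumes "proots P = mset zs"
  shows "P = smult (lead_coeff P) (\<Prod>i<degree P. [:- zs ! i, 1:])"
proof -
  have "length zs = degree P"
    using assms by (metis size_mset size_proots_complex)
  have "P = smult (lead_coeff P) (\<Prod>z\<in>#proots P. [:- z, 1:])"
    by (simp add: complex_poly_decompose_multiset)
  also have "(\<Prod>z\<in>#proots P. [:- z, 1:]) = (\<Prod>z\<leftarrow>zs. [:- z, 1:])"
    using assms by (simp add: prod_mset_prod_list[symmetric])
  also have "\<dots> = (\<Prod>i<degree P. [:- zs ! i, 1:])"
    using \<open>length zs = degree P\<close> by (subst prod.list_conv_set_nth) (auto simp: atLeast0LessThan)
  finally show ?thesis .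
qed

lemma complex_poly_decompose_partition:
  fixes P :: "complex poly" and Q :: "complex \<Rightarrow> bool"
  assumes "size (filter_mset Q (proots P)) = k"
  obtains b where "P = smult (lead_coeff P) (\<Prod>i<degree P. [:- b i, 1:])"
    and "\<forall>i<k. Q (b i)" and "\<forall>i. k \<le> i \<and> i < degree P \<longrightarrow> \<not> Q (b i)"
proof -
  obtain xs ys where xs: "mset xs = filter_mset Q (proots P)"
    and ys: "mset ys = filter_mset (\<lambda>z. \<not> Q z) (proots P)"
    using ex_mset by metis
  then have "proots P = mset (xs @ ys)"
    by simp
  then have "length (xs @ ys) = degree P"
    by (metis size_mset size_proots_complex)
  have "length xs = k"
    using xs assms by (metis size_mset)
  have "Q ((xs @ ys) ! i)" if "i < k" for i
  proof -
    have "xs ! i \<in># mset xs"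
      using that \<open>length xs = k\<close> by simp
    then show ?thesis
      using xs that \<open>length xs = k\<close> by (simp add: nth_append)
  qed
  moreover have "\<not> Q ((xs @ ys) ! i)" if "k \<le> i" "i < degree P" for i
  proof -
    have "ys ! (i - k) \<in># mset ys"
      using that \<open>length xs = k\<close> \<open>length (xs @ ys) = degree P\<close> by simp
    then show ?thesis
      using ys that(1) \<open>length xs = k\<close> by (simp add: nth_append)
  qed
  ultimately show ?thesis
    using that[of "\<lambda>i. (xs @ ys) ! i"] complex_poly_decompose_list[OF \<open>proots P = mset (xs @ ys)\<close>]
    by blast
qed

theorem theorem2:
  fixes K :: "complex set" and n m :: nat and p :: "complex poly" and a :: "nat \<Rightarrow> complex"
  assumes "convex K" and "open K" and "K \<noteq> {}" and "bounded K"
    and "n \<ge> 1" and "m \<ge> 1"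
    and "degree p = n + m"
    and "p = smult (lead_coeff p) (\<Prod>i<n+m. [:- a i, 1:])"
    and "\<forall>i<n. a i \<in> K"
    and "\<forall>i. n \<le> i \<and> i < n + m \<longrightarrow> a i \<notin> K"
    and "(MIN i\<in>{n..<n+m}. infdist (a i) K)
           \<ge> 2 * diameter K * sqrt ((real m)\<^sup>2 / (real n)\<^sup>2 + real m / real n)"
  shows "\<exists>b :: nat \<Rightarrow> complex.
           pderiv p = smult (lead_coeff (pderiv p)) (\<Prod>i<n+m-1. [:- b i, 1:])
         \<and> (\<forall>i<n-1. infdist (b i) K \<le> diameter K * sqrt (real m) / sqrt (real (m + n)))
         \<and> (\<forall>i. n - 1 \<le> i \<and> i < n + m - 1 \<longrightarrow>
                infdist (b i) K \<ge> diameter K * sqrt (real m / real (n + m)))"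
proof -
  define D where "D = diameter K"
  define \<delta> where "\<delta> = (MIN i\<in>{n..<n+m}. infdist (a i) K)"
  define r where "r = D * sqrt (real m / real (n + m))"
  have "D > 0"
    using assms(2-4) by (simp add: D_def diameter_pos_interior interior_open)
  then have r: "0 < r" "r < D" "r < \<delta>" "real m / (\<delta> - r) \<le> real n * r / (r\<^sup>2 + D\<^sup>2)"
    using sqrt_ratio_radius_bounds[OF assms(5,6) _ assms(11)[folded D_def \<delta>_def]] by (simp_all add: r_def)
  \<comment> \<open>The hypothesis that the far roots lie outside K is implied by the distance bound.\<close>
  interpret near_far_roots K a "{..<n}" "{n..<n+m}" \<delta> r
    using assms(1-5,9) r by unfold_locales (auto simp: \<delta>_def D_def lessThan_empty_iff)
  have "(\<Prod>i<n+m. [:- a i, 1:]) = near_factor * far_factor"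
    by (subst prod.union_disjoint[symmetric]) (auto intro!: prod.cong)
  then have "pderiv p = pderiv (smult (lead_coeff p) (near_factor * far_factor))"
    using assms(8) by (intro arg_cong[where f = pderiv]) simp
  moreover have "lead_coeff p \<noteq> 0"
    using assms(5,7) by (metis add_is_0 degree_0 leading_coeff_0_iff not_one_le_zero)
  ultimately have "proots (pderiv p) = proots (pderiv (near_factor * far_factor))"
    by (simp add: pderiv_smult)
  then have "size (filter_mset (\<lambda>z. infdist z K < r) (proots (pderiv p))) = n - 1"
    using size_proots_pderiv_below_level by simp
  moreover have "degree (pderiv p) = n + m - 1"
    using assms(7) by (simp add: degree_pderiv)
  ultimately obtain b where "pderiv p = smult (lead_coeff (pderiv p)) (\<Prod>i<n+m-1. [:- b i, 1:])"
    and "\<forall>i<n-1. infdist (b i) K < r" and "\<forall>i. n - 1 \<le> i \<and> i < n + m - 1 \<longrightarrow> \<not> infdist (b i) K < r"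
    using complex_poly_decompose_partition by metis
  moreover have "r = diameter K * sqrt (real m) / sqrt (real (m + n))"
    by (simp add: r_def D_def real_sqrt_divide add.commute)
  ultimately show ?thesis
    by (auto simp: r_def D_def not_less intro!: exI[of _ b])
qed

end
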